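(* Assume the perfect setting (the pretrained LLM coincides with the conditional distribution $\mathtt{LLM}$ induced by the pretraining distribution $\mathbb{P}_{\mathcal{D}}$ described in the context, and the Reporter's translator coincides with the true emission $\mathbb{O}$). Then for all $(h,t)\in[H]\times[T]$, the LLM's recommended policy $\pi^t_{h,\mathtt{LLM}}(\cdot\mid\tau_h^t,\omega^t):=\mathtt{LLM}(\cdot\mid \mathtt{pt}_h^t)$ satisfies $$\pi^t_{h,\mathtt{LLM}}(\cdot\mid\tau_h^t,\omega^t)=\sum_{z\in\mathcal{Z}}\pi^*_{z,h}(\cdot\mid\tau_h^t,\omega^t)\cdot\mathbb{P}_{\mathcal{D}}(z\mid\mathtt{pt}_h^t),$$ where $\mathtt{pt}_h^t=\mathcal{H}_t\cup\{\omega^t,\tau_h^t\}$ and $\mathbb{P}_{\mathcal{D}}(z\mid \mathtt{pt}_h^t)$ is the posterior of $z$ given the prompt under $\mathbb{P}_{\mathcal{D}}$.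
   Context: High-level model: a finite set $\mathcal{Z}$ of latent variables; state space $\mathcal{S}$, observation space $\mathcal{O}$, subgoal space $\mathcal{G}$, task space $\Omega$, horizon $H\in\mathbb{N}$. For each $z\in\mathcal{Z}$ there are transition kernels $\mathbb{P}_{z,h}(s'\mid s,g)$, $h\in[H]$; a common emission distribution $\mathbb{O}(o\mid s)$; an initial state distribution $\rho$; rewards $r_h(o,\omega)\in[0,1]$. A trajectory up to step $h$ is $\tau_h=(o_1,g_1,\dots,o_{h-1},g_{h-1},o_h)$. A policy is $\pi=\{\pi_h\}_{h\in[H]}$ with $\pi_h:(\mathcal{O}\times\mathcal{G})^{h-1}\times\mathcal{O}\times\Omega\to\Delta(\mathcal{G})$; under $z$ and task $\omega$: $s_1\sim\rho$, $o_h\sim\mathbb{O}(\cdot\mid s_h)$, $g_h\sim\pi_h(\cdot\mid\tau_h,\omega)$, $s_{h+1}\sim\mathbb{P}_{z,h}(\cdot\mid s_h,g_h)$. The value is $\mathcal{J}_z(\pi,\omega)=\mathbb{E}[\sum_{h=1}^H r_h(o_h,\omega)]$ and $\pi^*_z(\omega)\in\arg\max_\pi\mathcal{J}_z(\pi,\omega)$ is an optimal policy with step-$h$ components $\pi^*_{z,h}(\cdot\mid\tau_h,\omega)$. Pretraining distribution: given priors $\mathcal{P}_{\mathcal{Z}}$ on $\mathcal{Z}$, $\mathcal{P}_\Omega$ on $\Omega$, a behavior policy $\pi^b$ and $T_{\rm p}\in\mathbb{N}$, a data point $D=\{z\}\cup\{\omega^t,\tau_H^t,g^{t,*}_{1:H},s^t_{1:H}\}_{t\in[T_{\rm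 p}]}$ has joint law $$\mathbb{P}_{\mathcal{D}}(D)=\mathcal{P}_{\mathcal{Z}}(z)\prod_{t=1}^{T_{\rm p}}\mathcal{P}_\Omega(\omega^t)\prod_{h=1}^{H}\pi^*_{z,h}(g^{t,*}_h\mid\tau_h^t,\omega^t)\,\mathbb{O}(o_h^t\mid s_h^t)\,\pi^b_h(g_h^t\mid\tau_h^t,\omega^t)\,\mathbb{P}_{z,h}(s^t_{h+1}\mid s_h^t,g_h^t)$$ (the expert labels $g^{t,*}_h$ do not influence the trajectory). The LLM is trained on the token sequences $(\omega^t,o_1^t,g_1^t,\dots,o_H^t)_{t}$ where at each subgoal position the target token is the expert label $g_h^{t,*}$; the (perfect) $\mathtt{LLM}(\cdot\mid S)$ is the conditional distribution under $\mathbb{P}_{\mathcal{D}}$ of the next target token given the preceding token sequence $S$ (with $z$ unobserved). In episode $t$ of deployment, $\mathcal{H}_t=\{\omega^i,\tau_H^i\}_{i=1}^{t-1}$ is the history of previous tasks and full trajectories, and the prompt at step $h$ is $\mathtt{pt}_h^t=\mathcal{H}_t\cup\{\omega^t,\tau_h^t\}$. *)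

theory Defs
  imports "HOL-Probability.Probability"
begin

text \<open>A (high-level) policy: step index h, past pairs (o_1,g_1,...,o_{h-1},g_{h-1}),
  current observation o_h, task; returns a distribution over subgoals.\<close>
type_synonym ('o, 'g, 'w) policy = "nat \<Rightarrow> ('o \<times> 'g) list \<Rightarrow> 'o \<Rightarrow> 'w \<Rightarrow> 'g pmf"

fun run_steps ::
  "('z \<Rightarrow> nat \<Rightarrow> 's \<Rightarrow> 'g \<Rightarrow> 's pmf) \<Rightarrow> ('s \<Rightarrow> 'o pmf) \<Rightarrow> ('o, 'g, 'w) policy \<Rightarrow>
   'z \<Rightarrow> 'w \<Rightarrow> nat \<Rightarrow> nat \<Rightarrow> 's \<Rightarrow> ('o \<times> 'g) list \<Rightarrow> 'o list pmf" where
  "run_steps P Ob pol z w 0 h s past = return_pmf []"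
| "run_steps P Ob pol z w (Suc n) h s past =
     bind_pmf (Ob s) (\<lambda>ob. bind_pmf (pol h past ob w) (\<lambda>g. bind_pmf (P z h s g) (\<lambda>s'.
       map_pmf (\<lambda>rest. ob # rest) (run_steps P Ob pol z w n (Suc h) s' (past @ [(ob, g)])))))"

definition value_J ::
  "('z \<Rightarrow> nat \<Rightarrow> 's \<Rightarrow> 'g \<Rightarrow> 's pmf) \<Rightarrow> ('s \<Rightarrow> 'o pmf) \<Rightarrow> 's pmf \<Rightarrow>
   (nat \<Rightarrow> 'o \<Rightarrow> 'w \<Rightarrow> real) \<Rightarrow> nat \<Rightarrow> 'z \<Rightarrow> ('o, 'g, 'w) policy \<Rightarrow> 'w \<Rightarrow> real" where
  "value_J P Ob rho r H z pol w =
     measure_pmf.expectation (bind_pmf rho (\<lambda>s. run_steps P Ob pol z w H 1 s []))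
       (\<lambda>os. \<Sum>h<length os. r (Suc h) (os ! h) w)"

definition optimal_policy ::
  "('z \<Rightarrow> nat \<Rightarrow> 's \<Rightarrow> 'g \<Rightarrow> 's pmf) \<Rightarrow> ('s \<Rightarrow> 'o pmf) \<Rightarrow> 's pmf \<Rightarrow>
   (nat \<Rightarrow> 'o \<Rightarrow> 'w \<Rightarrow> real) \<Rightarrow> nat \<Rightarrow> 'z \<Rightarrow> ('o, 'g, 'w) policy \<Rightarrow> bool" where
  "optimal_policy P Ob rho r H z pol \<longleftrightarrow>
     (\<forall>w pol'. value_J P Ob rho r H z pol' w \<le> value_J P Ob rho r H z pol w)"

text \<open>The expert label does not influence the trajectory.\<close>
fun pre_steps ::
  "('z \<Rightarrow> nat \<Rightarrow> 's \<Rightarrow> 'g \<Rightarrow> 's pmf) \<Rightarrow> ('s \<Rightarrow> 'o pmf) \<Rightarrow> ('z \<Rightarrow> ('o, 'g, 'w) policy) \<Rightarrow>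
   ('o, 'g, 'w) policy \<Rightarrow> 'z \<Rightarrow> 'w \<Rightarrow> nat \<Rightarrow> nat \<Rightarrow> 's \<Rightarrow> ('o \<times> 'g) list \<Rightarrow>
   ('s \<times> 'o \<times> 'g \<times> 'g) list pmf" where
  "pre_steps P Ob pis pib z w 0 h s past = return_pmf []"
| "pre_steps P Ob pis pib z w (Suc n) h s past =
     bind_pmf (Ob s) (\<lambda>ob. bind_pmf (pis z h past ob w) (\<lambda>gs. bind_pmf (pib h past ob w) (\<lambda>g.
       bind_pmf (P z h s g) (\<lambda>s'.
         map_pmf (\<lambda>rest. (s, ob, g, gs) # rest)
           (pre_steps P Ob pis pib z w n (Suc h) s' (past @ [(ob, g)]))))))"

definition pre_episode ::
  "('z \<Rightarrow> nat \<Rightarrow> 's \<Rightarrow> 'g \<Rightarrow> 's pmf) \<Rightarrow> ('s \<Rightarrow> 'o pmf) \<Rightarrow> 's pmf \<Rightarrow> 'w pmf \<Rightarrow>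
   ('z \<Rightarrow> ('o, 'g, 'w) policy) \<Rightarrow> ('o, 'g, 'w) policy \<Rightarrow> nat \<Rightarrow> 'z \<Rightarrow>
   ('w \<times> ('s \<times> 'o \<times> 'g \<times> 'g) list) pmf" where
  "pre_episode P Ob rho PW pis pib H z =
     bind_pmf PW (\<lambda>w. bind_pmf rho (\<lambda>s.
       map_pmf (\<lambda>st. (w, st)) (pre_steps P Ob pis pib z w H 1 s [])))"

fun pre_episodes ::
  "('z \<Rightarrow> nat \<Rightarrow> 's \<Rightarrow> 'g \<Rightarrow> 's pmf) \<Rightarrow> ('s \<Rightarrow> 'o pmf) \<Rightarrow> 's pmf \<Rightarrow> 'w pmf \<Rightarrow>
   ('z \<Rightarrow> ('o, 'g, 'w) policy) \<Rightarrow> ('o, 'g, 'w) policy \<Rightarrow> nat \<Rightarrow> 'z \<Rightarrow> nat \<Rightarrow>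
   ('w \<times> ('s \<times> 'o \<times> 'g \<times> 'g) list) list pmf" where
  "pre_episodes P Ob rho PW pis pib H z 0 = return_pmf []"
| "pre_episodes P Ob rho PW pis pib H z (Suc n) =
     bind_pmf (pre_episode P Ob rho PW pis pib H z) (\<lambda>e.
       map_pmf (\<lambda>es. e # es) (pre_episodes P Ob rho PW pis pib H z n))"

definition pretrain_dist ::
  "'z pmf \<Rightarrow> ('z \<Rightarrow> nat \<Rightarrow> 's \<Rightarrow> 'g \<Rightarrow> 's pmf) \<Rightarrow> ('s \<Rightarrow> 'o pmf) \<Rightarrow> 's pmf \<Rightarrow> 'w pmf \<Rightarrow>
   ('z \<Rightarrow> ('o, 'g, 'w) policy) \<Rightarrow> ('o, 'g, 'w) policy \<Rightarrow> nat \<Rightarrow> nat \<Rightarrow>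
   ('z \<times> ('w \<times> ('s \<times> 'o \<times> 'g \<times> 'g) list) list) pmf" where
  "pretrain_dist PZ P Ob rho PW pis pib H Tp =
     bind_pmf PZ (\<lambda>z. map_pmf (\<lambda>es. (z, es)) (pre_episodes P Ob rho PW pis pib H z Tp))"

text \<open>Partial trajectory tau_h = (o_1,g_1,...,o_{h-1},g_{h-1},o_h) of an episode (h >= 1),
  represented as the list of the first h-1 (o,g) pairs together with o_h.\<close>
definition ep_traj :: "('w \<times> ('s \<times> 'o \<times> 'g \<times> 'g) list) \<Rightarrow> nat \<Rightarrow> ('o \<times> 'g) list \<times> 'o" where
  "ep_traj e h = (take (h - 1) (map (\<lambda>(s, x, g, gs). (x, g)) (snd e)),
                  fst (snd (snd e ! (h - 1))))"

text \<open>The event that a data point matches the prompt pt_h^t = H_t \<union> {w^t, tau_h^t}, where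
  the history hist = [(w^1, tau_H^1), ..., (w^{t-1}, tau_H^{t-1})] (so t = length hist + 1)
  and tau_h^t = (past, o) with h = length past + 1.\<close>
definition prompt_event ::
  "nat \<Rightarrow> ('w \<times> (('o \<times> 'g) list \<times> 'o)) list \<Rightarrow> 'w \<Rightarrow> ('o \<times> 'g) list \<Rightarrow> 'o \<Rightarrow>
   ('z \<times> ('w \<times> ('s \<times> 'o \<times> 'g \<times> 'g) list) list) set" where
  "prompt_event H hist w past ob =
     {D. length hist < length (snd D) \<and>
         (\<forall>i < length hist. fst (snd D ! i) = fst (hist ! i) \<and>
                            ep_traj (snd D ! i) H = snd (hist ! i)) \<and>
         fst (snd D ! length hist) = w \<and>
         ep_traj (snd D ! length hist) (Suc (length past)) = (past, ob)}"

text \<open>Expert label g_h^{t,*} of episode t (given as 0-based index t-1) at step h.\<close>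
definition expert_label :: "('z \<times> ('w \<times> ('s \<times> 'o \<times> 'g \<times> 'g) list) list) \<Rightarrow> nat \<Rightarrow> nat \<Rightarrow> 'g" where
  "expert_label D i h = snd (snd (snd (snd (snd D ! i) ! (h - 1))))"

definition cond_prob :: "'a pmf \<Rightarrow> 'a set \<Rightarrow> 'a set \<Rightarrow> real" where
  "cond_prob p A B = measure_pmf.prob p (A \<inter> B) / measure_pmf.prob p B"

text \<open>The perfect LLM: conditional law under P_D of the next target token (the expert label
  g_h^{t,*}) given the prompt pt_h^t.\<close>
definition LLM ::
  "('z \<times> ('w \<times> ('s \<times> 'o \<times> 'g \<times> 'g) list) list) pmf \<Rightarrow> nat \<Rightarrow>
   ('w \<times> (('o \<times> 'g) list \<times> 'o)) list \<Rightarrow> 'w \<Rightarrow> ('o \<times> 'g) list \<Rightarrow> 'o \<Rightarrow> 'g \<Rightarrow> real" where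
  "LLM PD H hist w past ob g =
     cond_prob PD {D. expert_label D (length hist) (Suc (length past)) = g}
                  (prompt_event H hist w past ob)"

definition posterior ::
  "('z \<times> ('w \<times> ('s \<times> 'o \<times> 'g \<times> 'g) list) list) pmf \<Rightarrow> nat \<Rightarrow>
   ('w \<times> (('o \<times> 'g) list \<times> 'o)) list \<Rightarrow> 'w \<Rightarrow> ('o \<times> 'g) list \<Rightarrow> 'o \<Rightarrow> 'z \<Rightarrow> real" where
  "posterior PD H hist w past ob z =
     cond_prob PD {D. fst D = z} (prompt_event H hist w past ob)"

end

theory Submission
  imports Defs
begin

text \<open>Given the latent z, the expert label of step h in episode t is sampled from
  pi*_{z,h}(. | tau_h^t, omega^t) at the moment step h is generated and is never fed back into the
  trajectory, while the prompt only constrains omega^t, tau_h^t and the earlier episodes, which are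
  independent of episode t given z. Hence P(label = g, prompt | z) = pi*_{z,h}(g | tau_h^t, omega^t)
  P(prompt | z), and the law of total probability over z yields the posterior mixture.\<close>

lemma measure_bind_pmf:
  "measure_pmf.prob (bind_pmf M N) X = (\<integral>x. measure_pmf.prob (N x) X \<partial>M)"
proof -
  have "ennreal (measure_pmf.prob (bind_pmf M N) X) = (\<integral>\<^sup>+x. ennreal (measure_pmf.prob (N x) X) \<partial>M)"
    by (simp only: measure_pmf.emeasure_eq_measure[symmetric] emeasure_bind_pmf)
  also have "\<dots> = ennreal (\<integral>x. measure_pmf.prob (N x) X \<partial>M)"
    by (intro nn_integral_eq_integral measure_pmf.integrable_const_bound[where B=1]) auto
  finally show ?thesis by (simp add: integral_nonneg_AE)
qed

text \<open>Stated multiplicatively, so that it holds trivially for null \<open>A\<close> and is preserved by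
  mixtures.\<close>

definition has_cond_prob :: "'a pmf \<Rightarrow> 'a set \<Rightarrow> 'a set \<Rightarrow> real \<Rightarrow> bool" where
  "has_cond_prob p L A c \<longleftrightarrow> measure_pmf.prob p (L \<inter> A) = c * measure_pmf.prob p A"

lemma has_cond_prob_bind:
  assumes "\<And>x. x \<in> set_pmf p \<Longrightarrow> has_cond_prob (f x) L A c"
  shows "has_cond_prob (bind_pmf p f) L A c"
proof -
  have "(\<integral>x. measure_pmf.prob (f x) (L \<inter> A) \<partial>p) = (\<integral>x. c * measure_pmf.prob (f x) A \<partial>p)"
    using assms by (intro integral_cong_AE) (auto simp: AE_measure_pmf_iff has_cond_prob_def)
  then show ?thesis
    by (simp add: has_cond_prob_def measure_bind_pmf)
qed

lemma has_cond_prob_map: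
  "has_cond_prob p (f -` L) (f -` A) c \<Longrightarrow> has_cond_prob (map_pmf f p) L A c"
  by (simp add: has_cond_prob_def vimage_Int)

lemma has_cond_prob_null:
  assumes "A \<inter> set_pmf p = {}"
  shows "has_cond_prob p L A c"
proof -
  have "measure_pmf.prob p A = 0" "measure_pmf.prob p (L \<inter> A) = 0"
    using assms by (auto simp: measure_pmf_zero_iff)
  then show ?thesis
    by (simp add: has_cond_prob_def)
qed

lemma has_cond_prob_bind_label:
  assumes "\<And>x l. l \<in> set_pmf (F x) \<Longrightarrow> label l = x \<and> l \<in> A"
  shows "has_cond_prob (bind_pmf Q F) {l. label l = g} A (pmf Q g)"
proof -
  have "measure_pmf.prob (F x) ({l. label l = g} \<inter> A) = indicator {g} x" for x
  proof (cases "x = g")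
    case True
    then show ?thesis using assms by (auto simp: measure_pmf.prob_eq_1 AE_measure_pmf_iff)
  next
    case False
    then show ?thesis using assms by (auto simp: measure_pmf_zero_iff)
  qed
  moreover have "measure_pmf.prob (F x) A = 1" for x
    using assms by (auto simp: measure_pmf.prob_eq_1 AE_measure_pmf_iff)
  ultimately show ?thesis
    by (simp add: has_cond_prob_def measure_bind_pmf measure_pmf_single)
qed

lemma cond_prob_sum_fst:
  fixes p :: "('z::finite \<times> 'a) pmf"
  assumes "\<And>z. has_cond_prob p L (A \<inter> {D. fst D = z}) (c z)"
  shows "cond_prob p L A = (\<Sum>z\<in>UNIV. c z * cond_prob p {D. fst D = z} A)"
proof -
  have sum_over_fst: "measure_pmf.prob p X = (\<Sum>z\<in>UNIV. measure_pmf.prob p (X \<inter> {D. fst D = z}))" for X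
  proof -
    have "X = (\<Union>z. X \<inter> {D. fst D = z})" by auto
    also have "measure_pmf.prob p \<dots> = (\<Sum>z\<in>UNIV. measure_pmf.prob p (X \<inter> {D. fst D = z}))"
      by (intro measure_pmf.finite_measure_finite_Union) (auto simp: disjoint_family_on_def)
    finally show ?thesis .
  qed
  have "measure_pmf.prob p (L \<inter> A) = (\<Sum>z\<in>UNIV. c z * measure_pmf.prob p (A \<inter> {D. fst D = z}))"
    unfolding sum_over_fst[of "L \<inter> A"] using assms
    by (intro sum.cong) (simp_all add: has_cond_prob_def Int_assoc)
  then show ?thesis
    by (simp add: cond_prob_def sum_divide_distrib Int_commute)
qed

lemma has_cond_prob_mixture_component:
  assumes "has_cond_prob (q z) (Pair z -` L) (Pair z -` A) c"
  shows "has_cond_prob (bind_pmf PZ (\<lambda>z'. map_pmf (Pair z') (q z'))) L (A \<inter> {D. fst D = z}) c"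
proof (rule has_cond_prob_bind)
  fix z'
  show "has_cond_prob (map_pmf (Pair z') (q z')) L (A \<inter> {D. fst D = z}) c"
  proof (cases "z' = z")
    case True
    with assms show ?thesis
      by (intro has_cond_prob_map) (simp add: vimage_Int)
  next
    case False
    then show ?thesis
      by (intro has_cond_prob_null) auto
  qed
qed

lemma has_cond_prob_pre_steps_head:
  "has_cond_prob (pre_steps P Ob pis pib z w (Suc n) h s past)
     {l. snd (snd (snd (l ! 0))) = g} {l. fst (snd (l ! 0)) = ob} (pmf (pis z h past ob w) g)"
  unfolding pre_steps.simps
  apply (rule has_cond_prob_bind)
  subgoal for ob'
  proof (cases "ob' = ob")
    case True
    then show ?thesis
      by simp (rule has_cond_prob_bind_label, auto)
  next
    case False
    then show ?thesis
      by (intro has_cond_prob_null) auto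
  qed
  done

lemma has_cond_prob_pre_steps_expert_label:
  "k < n \<Longrightarrow> has_cond_prob (pre_steps P Ob pis pib z w n h s past)
     {l. snd (snd (snd (l ! k))) = g}
     {l. take k (map (\<lambda>(s, x, g, gs). (x, g)) l) = pfx \<and> fst (snd (l ! k)) = ob}
     (pmf (pis z (h + k) (past @ pfx) ob w) g)"
proof (induction n arbitrary: k h s past pfx)
  case 0
  then show ?case by simp
next
  case (Suc n)
  show ?case
  proof (cases k)
    case 0
    then show ?thesis
      using has_cond_prob_pre_steps_head[of P Ob pis pib z w n h s past g ob]
      by (cases "pfx = []") (auto intro: has_cond_prob_null)
  next
    case (Suc k')
    then have "k' < n"
      using Suc.prems by simp
    show ?thesis
      unfolding \<open>k = Suc k'\<close> pre_steps.simps
      apply (intro has_cond_prob_bind has_cond_prob_map)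
      subgoal for ob' gs g' s'
      proof (cases "\<exists>pfx'. pfx = (ob', g') # pfx'")
        case True
        then obtain pfx' where pfx: "pfx = (ob', g') # pfx'"
          by blast
        from Suc.IH[OF \<open>k' < n\<close>, of "Suc h" s' "past @ [(ob', g')]" pfx'] show ?thesis
          by (simp add: pfx)
      next
        case False
        then show ?thesis by (intro has_cond_prob_null) auto
      qed
      done
  qed
qed

lemma has_cond_prob_pre_episode_expert_label:
  assumes "length past < H"
  shows "has_cond_prob (pre_episode P Ob rho PW pis pib H z)
     {e. snd (snd (snd (snd e ! length past))) = g}
     {e. fst e = w \<and> ep_traj e (Suc (length past)) = (past, ob)}
     (pmf (pis z (Suc (length past)) past ob w) g)"
  unfolding pre_episode_def
  apply (rule has_cond_prob_bind)
  subgoal for w'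
  proof (cases "w' = w")
    case True
    note steps = has_cond_prob_pre_steps_expert_label[OF assms, of P Ob pis pib z w 1 _ "[]" g past ob]
    show ?thesis
      unfolding True using steps
      by (intro has_cond_prob_bind has_cond_prob_map) (simp add: ep_traj_def)
  next
    case False
    then show ?thesis
      by (intro has_cond_prob_null) auto
  qed
  done

lemma measure_pmf_Cons_head:
  "measure_pmf.prob (bind_pmf p (\<lambda>x. map_pmf (Cons x) q)) {xs. 0 < length xs \<and> xs ! 0 \<in> B}
   = measure_pmf.prob p B"
proof -
  have "(\<integral>x. measure_pmf.prob q (Cons x -` {xs. 0 < length xs \<and> xs ! 0 \<in> B}) \<partial>p)
      = (\<integral>x. indicator B x \<partial>p)"
    by (intro Bochner_Integration.integral_cong) (auto simp: indicator_def)
  then show ?thesis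
    by (simp add: measure_bind_pmf)
qed

lemma has_cond_prob_pre_episodes_nth:
  assumes "has_cond_prob (pre_episode P Ob rho PW pis pib H z) L A c" and "i < n"
  shows "has_cond_prob (pre_episodes P Ob rho PW pis pib H z n)
     {es. es ! i \<in> L} {es. i < length es \<and> (\<forall>j<i. es ! j \<in> C j) \<and> es ! i \<in> A} c"
  using assms(2)
proof (induction i arbitrary: n C)
  case 0
  then obtain m where n: "n = Suc m" by (cases n) auto
  have head_events:
    "{es. 0 < length es \<and> (\<forall>j<0. es ! j \<in> C j) \<and> es ! 0 \<in> A}
      = {es. 0 < length es \<and> es ! 0 \<in> A}"
    "{es. es ! 0 \<in> L} \<inter> {es. 0 < length es \<and> es ! 0 \<in> A}
      = {es. 0 < length es \<and> es ! 0 \<in> L \<inter> A}"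
    by auto
  from assms(1) show ?case
    unfolding has_cond_prob_def n pre_episodes.simps head_events measure_pmf_Cons_head .
next
  case (Suc i)
  then obtain m where n: "n = Suc m" and "i < m" by (cases n) auto
  show ?case
    unfolding n pre_episodes.simps
    apply (intro has_cond_prob_bind has_cond_prob_map)
    subgoal for e
    proof (cases "e \<in> C 0")
      case True
      have "Cons e -` {es. Suc i < length es \<and> (\<forall>j<Suc i. es ! j \<in> C j) \<and> es ! Suc i \<in> A}
          = {es. i < length es \<and> (\<forall>j<i. es ! j \<in> C (Suc j)) \<and> es ! i \<in> A}"
        using True by (auto simp: All_less_Suc2)
      with Suc.IH[OF \<open>i < m\<close>, of "\<lambda>j. C (Suc j)"] show ?thesis
        by simp
    next
      case False
      then show ?thesis
        by (intro has_cond_prob_null) auto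
    qed
    done
qed

lemma has_cond_prob_expert_label_given_prompt:
  assumes "length hist < Tp" and "length past < H"
  shows "has_cond_prob (pre_episodes P Ob rho PW pis pib H z Tp)
     (Pair z -` {D. expert_label D (length hist) (Suc (length past)) = g})
     (Pair z -` prompt_event H hist w past ob)
     (pmf (pis z (Suc (length past)) past ob w) g)"
  using has_cond_prob_pre_episodes_nth[OF has_cond_prob_pre_episode_expert_label[OF assms(2)] assms(1),
      where C = "\<lambda>j. {e. fst e = fst (hist ! j) \<and> ep_traj e H = snd (hist ! j)}"]
  by (simp add: prompt_event_def expert_label_def vimage_def)

theorem proposition1:
  fixes PZ :: "'z::finite pmf"
    and P :: "'z \<Rightarrow> nat \<Rightarrow> 's \<Rightarrow> 'g \<Rightarrow> 's pmf"
    and Ob :: "'s \<Rightarrow> 'o pmf"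
    and rho :: "'s pmf"
    and PW :: "'w pmf"
    and r :: "nat \<Rightarrow> 'o \<Rightarrow> 'w \<Rightarrow> real"
    and pis :: "'z \<Rightarrow> ('o, 'g, 'w) policy"
    and pib :: "('o, 'g, 'w) policy"
    and H Tp :: nat
    and hist :: "('w \<times> (('o \<times> 'g) list \<times> 'o)) list"
    and w :: 'w and past :: "('o \<times> 'g) list" and ob :: 'o
  assumes reward_range: "\<forall>h x v. 0 \<le> r h x v \<and> r h x v \<le> 1"
    and pis_optimal: "\<forall>z. optimal_policy P Ob rho r H z (pis z)"
    and t_le: "length hist < Tp"
    and h_le: "length past < H"
    and prompt_pos: "measure_pmf.prob (pretrain_dist PZ P Ob rho PW pis pib H Tp)
                       (prompt_event H hist w past ob) > 0"
  shows "\<forall>g. LLM (pretrain_dist PZ P Ob rho PW pis pib H Tp) H hist w past ob g =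
           (\<Sum>z\<in>UNIV. pmf (pis z (Suc (length past)) past ob w) g *
              posterior (pretrain_dist PZ P Ob rho PW pis pib H Tp) H hist w past ob z)"
proof
  fix g
  have "has_cond_prob (pretrain_dist PZ P Ob rho PW pis pib H Tp)
      {D. expert_label D (length hist) (Suc (length past)) = g}
      (prompt_event H hist w past ob \<inter> {D. fst D = z}) (pmf (pis z (Suc (length past)) past ob w) g)"
    for z
    unfolding pretrain_dist_def
    by (intro has_cond_prob_mixture_component has_cond_prob_expert_label_given_prompt t_le h_le)
  then show "LLM (pretrain_dist PZ P Ob rho PW pis pib H Tp) H hist w past ob g =
      (\<Sum>z\<in>UNIV. pmf (pis z (Suc (length past)) past ob w) g *
         posterior (pretrain_dist PZ P Ob rho PW pis pib H Tp) H hist w past ob z)"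
    unfolding LLM_def posterior_def by (rule cond_prob_sum_fst)
qed
end
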